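(* Let $I$ be a nonempty open real interval and let $P(u)=\alpha+\beta u+\gamma u^2$ ($\alpha,\beta,\gamma\in\mathbb{R}$) be a polynomial of degree at most two which is positive on $I$. Let $D_P:=\beta^2-4\alpha\gamma$ be its discriminant and let $t\in\,]0,1[\,$ satisfy $(t-\frac12)D_P=0$. Let $\psi$ be a primitive function of $1/P$ on $I$ and let $\ell:=1/\sqrt{P}$. Then the functions $\varphi:=\psi^{-1}$ and $f:=\ell\circ\varphi$, defined on the interval $\psi(I)$, satisfy \[ \big(tf(x)+(1-t)f(y)\big)\varphi(tx+(1-t)y)=tf(x)\varphi(x)+(1-t)f(y)\varphi(y) \qquad\text{for all } x,y\in \psi(I). \] *)

theory Defs
  imports "HOL-Analysis.Analysis"
begin

end

theory Submission
  imports Defs "HOL-Complex_Analysis.Conformal_Mappings"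
begin

text \<open>Since \<open>\<phi>' = P \<circ> \<phi>\<close>, the pair \<open>(f, g)\<close> with \<open>g = f \<cdot> \<phi>\<close> solves the linear system
  \<open>f' = -\<beta>/2 f - \<gamma> g\<close>, \<open>g' = \<alpha> f + \<beta>/2 g\<close>, whose matrix has trace zero and square
  \<open>D\<^sub>P/4\<close> times the identity. Trace zero makes the Wronskian \<open>f(s) g(s+h) - g(s) f(s+h)\<close>
  independent of \<open>s\<close>; comparing it at \<open>s = x\<close> and \<open>s = (x+y)/2\<close> with \<open>h = (y-x)/2\<close> gives
  the claim for \<open>t = 1/2\<close>. If \<open>D\<^sub>P = 0\<close> the matrix is nilpotent, so \<open>f\<close> and \<open>g\<close> are affine
  and the claim holds for every \<open>t\<close>.\<close>

lemma affine_if_second_derivative_zero: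
  fixes h h' :: "real \<Rightarrow> real"
  assumes "convex J"
    and "\<And>z. z \<in> J \<Longrightarrow> (h has_real_derivative h' z) (at z)"
    and "\<And>z. z \<in> J \<Longrightarrow> (h' has_real_derivative 0) (at z)"
  shows "\<exists>a b. \<forall>z\<in>J. h z = a * z + b"
proof -
  obtain a where a: "\<forall>z\<in>J. h' z = a"
    using has_field_derivative_zero_constant[OF assms(1)] assms(3) has_field_derivative_at_within
    by blast
  have "((\<lambda>z. h z - a * z) has_real_derivative 0) (at z within J)" if "z \<in> J" for z
  proof -
    have "((\<lambda>z. h z - a * z) has_real_derivative h' z - a * 1) (at z)"
      by (intro DERIV_diff assms(2)[OF that] DERIV_cmult DERIV_ident)
    then show ?thesis using a that has_field_derivative_at_within by fastforce
  qed
  then obtain b where "\<forall>z\<in>J. h z - a * z = b"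
    using has_field_derivative_zero_constant[OF assms(1)] by blast
  then show ?thesis by (metis add.commute diff_eq_eq)
qed

lemma strict_mono_on_if_deriv_pos:
  fixes \<psi> d :: "real \<Rightarrow> real"
  assumes "is_interval I"
    and "\<And>u. u \<in> I \<Longrightarrow> (\<psi> has_real_derivative d u) (at u)" and "\<And>u. u \<in> I \<Longrightarrow> d u > 0"
  shows "strict_mono_on I \<psi>"
proof (rule strict_mono_onI)
  fix a b assume ab: "a \<in> I" "b \<in> I" "a < b"
  show "\<psi> a < \<psi> b"
  proof (rule DERIV_pos_imp_increasing[OF \<open>a < b\<close>])
    fix x assume "a \<le> x" "x \<le> b"
    then have "x \<in> I" using assms(1) ab unfolding is_interval_1 by blast
    then show "\<exists>y. DERIV \<psi> x :> y \<and> y > 0" using assms(2,3) by blast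
  qed
qed

lemma inv_into_has_real_derivative_reciprocal:
  fixes \<psi> p :: "real \<Rightarrow> real"
  assumes "open I" and "is_interval I"
    and deriv: "\<And>u. u \<in> I \<Longrightarrow> (\<psi> has_real_derivative 1 / p u) (at u)"
    and pos: "\<And>u. u \<in> I \<Longrightarrow> p u > 0"
    and "x \<in> \<psi> ` I"
  shows "(inv_into I \<psi> has_real_derivative p (inv_into I \<psi> x)) (at x)"
proof -
  obtain u where u: "u \<in> I" "x = \<psi> u" using \<open>x \<in> \<psi> ` I\<close> by blast
  have "inj_on \<psi> I"
    using strict_mono_on_if_deriv_pos[OF \<open>is_interval I\<close> deriv] pos
    by (simp add: strict_mono_on_imp_inj_on)
  then have inv: "\<And>v. v \<in> I \<Longrightarrow> inv_into I \<psi> (\<psi> v) = v" by simp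
  have "continuous_on I \<psi>"
    using deriv DERIV_isCont continuous_at_imp_continuous_on by blast
  then have "(inv_into I \<psi> has_real_derivative inverse (1 / p u)) (at (\<psi> u))"
    by (intro has_field_derivative_inverse_strong[OF deriv[OF u(1)] _ \<open>open I\<close> u(1) _ inv])
      (use pos[OF u(1)] in auto)
  then show ?thesis using u inv by simp
qed

lemma convex_continuous_image_interval:
  fixes \<psi> :: "real \<Rightarrow> real"
  assumes "is_interval I" and "continuous_on I \<psi>"
  shows "convex (\<psi> ` I)"
proof -
  have "connected (\<psi> ` I)"
    using assms connected_continuous_image is_interval_connected by blast
  then show ?thesis by (simp add: is_interval_connected_1[symmetric] is_interval_convex_1[symmetric])
qed

lemma trace_free_system_midpoint:
  fixes f g :: "real \<Rightarrow> real" and a b c :: real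
  assumes "convex J"
    and df: "\<And>z. z \<in> J \<Longrightarrow> (f has_real_derivative a * f z + b * g z) (at z)"
    and dg: "\<And>z. z \<in> J \<Longrightarrow> (g has_real_derivative c * f z - a * g z) (at z)"
    and "x \<in> J" "y \<in> J"
  shows "f ((x + y) / 2) * (g x + g y) = g ((x + y) / 2) * (f x + f y)"
proof -
  define m where "m = (x + y) / 2"
  define h where "h = y - m"
  define S where "S = J \<inter> (+) (- h) ` J"
  have "convex S" unfolding S_def using \<open>convex J\<close> by (intro convex_Int convex_translation)
  have S_iff: "s \<in> S \<longleftrightarrow> s \<in> J \<and> s + h \<in> J" for s
    unfolding S_def by (auto simp: image_iff intro: bexI[of _ "s + h"])
  define W where "W s = f s * g (s + h) - g s * f (s + h)" for s
  have "(W has_real_derivative 0) (at s within S)" if "s \<in> S" for s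
  proof -
    have s: "s \<in> J" "s + h \<in> J" using that S_iff by auto
    have "(W has_real_derivative
        (f s * (c * f (s+h) - a * g (s+h)) + (a * f s + b * g s) * g (s+h))
      - (g s * (a * f (s+h) + b * g (s+h)) + (c * f s - a * g s) * f (s+h))) (at s)"
      unfolding W_def[abs_def] using s
      by (intro DERIV_diff DERIV_mult' df dg DERIV_shift[THEN iffD1]) auto
    then show ?thesis by (simp add: algebra_simps has_field_derivative_at_within)
  qed
  then obtain C where "\<forall>s\<in>S. W s = C"
    using has_field_derivative_zero_constant[OF \<open>convex S\<close>] by blast
  have "m \<in> J"
    using convexD[OF \<open>convex J\<close> \<open>x \<in> J\<close> \<open>y \<in> J\<close>, of "1/2" "1/2"] unfolding m_def
    by (simp add: add_divide_distrib)
  moreover have "x + h = m" "m + h = y" unfolding h_def m_def by (simp_all add: field_simps)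
  ultimately have "x \<in> S" "m \<in> S" using assms(4,5) S_iff by simp_all
  then have "W x = W m" using \<open>\<forall>s\<in>S. W s = C\<close> by simp
  then show ?thesis
    unfolding W_def m_def[symmetric] \<open>x + h = m\<close> \<open>m + h = y\<close> by (simp add: algebra_simps)
qed

lemma nilpotent_system_affine:
  fixes f g :: "real \<Rightarrow> real" and a b c :: real
  assumes "convex J" and "a\<^sup>2 + b * c = 0"
    and df: "\<And>z. z \<in> J \<Longrightarrow> (f has_real_derivative a * f z + b * g z) (at z)"
    and dg: "\<And>z. z \<in> J \<Longrightarrow> (g has_real_derivative c * f z - a * g z) (at z)"
  shows "\<exists>p q. \<forall>z\<in>J. f z = p * z + q" and "\<exists>p q. \<forall>z\<in>J. g z = p * z + q"
proof -
  have "((\<lambda>z. a * f z + b * g z) has_real_derivative 0) (at z)"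
    and "((\<lambda>z. c * f z - a * g z) has_real_derivative 0) (at z)" if "z \<in> J" for z
  proof -
    have "((\<lambda>z. a * f z + b * g z) has_real_derivative
        a * (a * f z + b * g z) + b * (c * f z - a * g z)) (at z)"
      and "((\<lambda>z. c * f z - a * g z) has_real_derivative
        c * (a * f z + b * g z) - a * (c * f z - a * g z)) (at z)"
      using that by (auto intro!: DERIV_add DERIV_diff DERIV_cmult df dg)
    moreover have "a * (a * f z + b * g z) + b * (c * f z - a * g z) = (a\<^sup>2 + b * c) * f z"
      and "c * (a * f z + b * g z) - a * (c * f z - a * g z) = (a\<^sup>2 + b * c) * g z"
      by (simp_all add: algebra_simps power2_eq_square)
    ultimately show "((\<lambda>z. a * f z + b * g z) has_real_derivative 0) (at z)"
      and "((\<lambda>z. c * f z - a * g z) has_real_derivative 0) (at z)"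
      using assms(2) by simp_all
  qed
  then show "\<exists>p q. \<forall>z\<in>J. f z = p * z + q" and "\<exists>p q. \<forall>z\<in>J. g z = p * z + q"
    by (auto intro: affine_if_second_derivative_zero[OF \<open>convex J\<close>] df dg)
qed

lemma trace_free_system_convex_combination:
  fixes f g :: "real \<Rightarrow> real" and a b c t :: real
  assumes "convex J" and "0 \<le> t" "t \<le> 1" and "(t - 1/2) * (a\<^sup>2 + b * c) = 0"
    and df: "\<And>z. z \<in> J \<Longrightarrow> (f has_real_derivative a * f z + b * g z) (at z)"
    and dg: "\<And>z. z \<in> J \<Longrightarrow> (g has_real_derivative c * f z - a * g z) (at z)"
    and "x \<in> J" "y \<in> J"
  shows "f (t * x + (1 - t) * y) * (t * g x + (1 - t) * g y)
    = g (t * x + (1 - t) * y) * (t * f x + (1 - t) * f y)"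
proof (cases "t = 1/2")
  case True
  have m: "t * x + (1 - t) * y = (x + y) / 2" unfolding True by (simp add: field_simps)
  show ?thesis
    unfolding m using trace_free_system_midpoint[OF assms(1) df dg \<open>x \<in> J\<close> \<open>y \<in> J\<close>]
    unfolding True by (simp add: algebra_simps)
next
  case False
  have nil: "a\<^sup>2 + b * c = 0" using False assms(4) by simp
  obtain p q r s where f: "\<forall>z\<in>J. f z = p * z + q" and g: "\<forall>z\<in>J. g z = r * z + s"
    using nilpotent_system_affine[OF \<open>convex J\<close> nil df dg] by metis
  have "t * x + (1 - t) * y \<in> J"
    using convexD[OF \<open>convex J\<close> \<open>x \<in> J\<close> \<open>y \<in> J\<close>, of t "1 - t"] assms(2,3) by simp
  then have "f (t * x + (1 - t) * y) = t * f x + (1 - t) * f y"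
    and "g (t * x + (1 - t) * y) = t * g x + (1 - t) * g y"
    using f g \<open>x \<in> J\<close> \<open>y \<in> J\<close> by (simp_all add: algebra_simps)
  then show ?thesis by simp
qed

lemma inv_sqrt_quadratic_along_flow:
  fixes \<phi> :: "real \<Rightarrow> real" and \<alpha> \<beta> \<gamma> x :: real
  defines "P \<equiv> \<lambda>u. \<alpha> + \<beta> * u + \<gamma> * u\<^sup>2"
  assumes d\<phi>: "(\<phi> has_real_derivative P (\<phi> x)) (at x)" and pos: "P (\<phi> x) > 0"
  shows "((\<lambda>x. 1 / sqrt (P (\<phi> x))) has_real_derivative
      (- \<beta> / 2) * (1 / sqrt (P (\<phi> x))) + (- \<gamma>) * (\<phi> x / sqrt (P (\<phi> x)))) (at x)"
    and "((\<lambda>x. \<phi> x / sqrt (P (\<phi> x))) has_real_derivative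
      \<alpha> * (1 / sqrt (P (\<phi> x))) - (- \<beta> / 2) * (\<phi> x / sqrt (P (\<phi> x)))) (at x)"
proof -
  define S where "S = sqrt (P (\<phi> x))"
  define k where "k = \<beta> + 2 * \<gamma> * \<phi> x"
  have "S > 0" using pos unfolding S_def by simp
  have dP: "((\<lambda>x. P (\<phi> x)) has_real_derivative k * P (\<phi> x)) (at x)"
    unfolding P_def k_def by (rule derivative_eq_intros d\<phi> refl | simp add: P_def algebra_simps)+
  have dsqrt: "((\<lambda>x. sqrt (P (\<phi> x))) has_real_derivative k * S / 2) (at x)"
    using DERIV_chain2[OF DERIV_real_sqrt[OF pos] dP]
    by (rule DERIV_cong) (use pos in \<open>simp add: S_def field_simps\<close>)
  have "((\<lambda>x. 1 / sqrt (P (\<phi> x))) has_real_derivative (0 * S - 1 * (k * S / 2)) / (S * S)) (at x)"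
    using DERIV_divide[OF DERIV_const[of 1] dsqrt] \<open>S > 0\<close> unfolding S_def by simp
  moreover have "(0 * S - 1 * (k * S / 2)) / (S * S) = (- \<beta> / 2) * (1 / S) + (- \<gamma>) * (\<phi> x / S)"
    using \<open>S > 0\<close> unfolding k_def by (simp add: field_simps)
  ultimately show "((\<lambda>x. 1 / sqrt (P (\<phi> x))) has_real_derivative
      (- \<beta> / 2) * (1 / sqrt (P (\<phi> x))) + (- \<gamma>) * (\<phi> x / sqrt (P (\<phi> x)))) (at x)"
    unfolding S_def by simp
  have "((\<lambda>x. \<phi> x / sqrt (P (\<phi> x))) has_real_derivative
      (P (\<phi> x) * S - \<phi> x * (k * S / 2)) / (S * S)) (at x)"
    using DERIV_divide[OF d\<phi> dsqrt] \<open>S > 0\<close> unfolding S_def by simp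
  moreover have "(P (\<phi> x) * S - \<phi> x * (k * S / 2)) / (S * S)
      = \<alpha> * (1 / S) - (- \<beta> / 2) * (\<phi> x / S)"
    using \<open>S > 0\<close> unfolding k_def P_def by (simp add: field_simps power2_eq_square)
  ultimately show "((\<lambda>x. \<phi> x / sqrt (P (\<phi> x))) has_real_derivative
      \<alpha> * (1 / sqrt (P (\<phi> x))) - (- \<beta> / 2) * (\<phi> x / sqrt (P (\<phi> x)))) (at x)"
    unfolding S_def by simp
qed

theorem lemma2p4:
  fixes I :: "real set" and \<alpha> \<beta> \<gamma> t :: real and \<psi> :: "real \<Rightarrow> real"
  assumes "open I" and "is_interval I" and "I \<noteq> {}"
    and "\<forall>u\<in>I. \<alpha> + \<beta> * u + \<gamma> * u^2 > 0"
    and "0 < t" and "t < 1"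
    and "(t - 1/2) * (\<beta>^2 - 4 * \<alpha> * \<gamma>) = 0"
    and "\<forall>u\<in>I. (\<psi> has_real_derivative 1 / (\<alpha> + \<beta> * u + \<gamma> * u^2)) (at u)"
  defines "l \<equiv> (\<lambda>u. 1 / sqrt (\<alpha> + \<beta> * u + \<gamma> * u^2))"
    and "\<phi> \<equiv> inv_into I \<psi>"
  defines "f \<equiv> l \<circ> \<phi>"
  shows "\<forall>x\<in>\<psi> ` I. \<forall>y\<in>\<psi> ` I.
           (t * f x + (1 - t) * f y) * \<phi> (t * x + (1 - t) * y)
             = t * f x * \<phi> x + (1 - t) * f y * \<phi> y"
proof (intro ballI)
  define P where "P \<equiv> \<lambda>u. \<alpha> + \<beta> * u + \<gamma> * u\<^sup>2"
  define g where "g x = f x * \<phi> x" for x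
  let ?J = "\<psi> ` I"
  have pos: "\<And>u. u \<in> I \<Longrightarrow> P u > 0" and d\<psi>: "\<And>u. u \<in> I \<Longrightarrow> (\<psi> has_real_derivative 1 / P u) (at u)"
    using assms(4,8) unfolding P_def by auto
  have "convex ?J"
    using d\<psi> DERIV_isCont continuous_at_imp_continuous_on
    by (blast intro: convex_continuous_image_interval[OF \<open>is_interval I\<close>])
  have \<phi>_pos: "P (\<phi> z) > 0" if "z \<in> ?J" for z
    unfolding \<phi>_def using that by (intro pos inv_into_into)
  have d\<phi>: "(\<phi> has_real_derivative P (\<phi> z)) (at z)" if "z \<in> ?J" for z
    unfolding \<phi>_def using inv_into_has_real_derivative_reciprocal[OF assms(1,2) d\<psi> pos that] .
  have df: "(f has_real_derivative (- \<beta> / 2) * f z + (- \<gamma>) * g z) (at z)"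
    and dg: "(g has_real_derivative \<alpha> * f z - (- \<beta> / 2) * g z) (at z)" if "z \<in> ?J" for z
    using inv_sqrt_quadratic_along_flow[OF d\<phi>[OF that, unfolded P_def] \<phi>_pos[OF that, unfolded P_def]]
    unfolding g_def f_def l_def by (simp_all add: o_def mult.commute)
  fix x y assume "x \<in> ?J" "y \<in> ?J"
  define m where "m = t * x + (1 - t) * y"
  have "(t - 1/2) * ((- \<beta> / 2)\<^sup>2 + (- \<gamma>) * \<alpha>) = (t - 1/2) * (\<beta>^2 - 4 * \<alpha> * \<gamma>) / 4"
    by (simp add: field_simps power2_eq_square)
  also have "\<dots> = 0" using assms(7) by simp
  finally have trace_free: "(t - 1/2) * ((- \<beta> / 2)\<^sup>2 + (- \<gamma>) * \<alpha>) = 0" .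
  have "f m * (t * g x + (1 - t) * g y) = g m * (t * f x + (1 - t) * f y)"
    using trace_free_system_convex_combination[OF \<open>convex ?J\<close> _ _ trace_free df dg \<open>x \<in> ?J\<close> \<open>y \<in> ?J\<close>] assms(5,6)
    unfolding m_def by simp
  then have "f m * ((t * f x + (1 - t) * f y) * \<phi> m) = f m * (t * f x * \<phi> x + (1 - t) * f y * \<phi> y)"
    unfolding g_def by (simp add: algebra_simps)
  moreover have "f m > 0"
    using \<phi>_pos convexD[OF \<open>convex ?J\<close> \<open>x \<in> ?J\<close> \<open>y \<in> ?J\<close>, of t "1 - t"] assms(5,6)
    unfolding m_def f_def l_def P_def by simp
  ultimately show "(t * f x + (1 - t) * f y) * \<phi> (t * x + (1 - t) * y)
      = t * f x * \<phi> x + (1 - t) * f y * \<phi> y"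
    unfolding m_def[symmetric] by simp
qed

end
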